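(* Let $\widehat\Gamma$ be a Harnack graph with controlled, uniformly lazy weights, let $K$ be a set of vertices, and suppose $\Gamma:=\widehat\Gamma\setminus K$ is an infinite inner uniform subgraph of $\widehat\Gamma$. If $\widehat\Gamma$ is $S$-transient with respect to $K$, then $h:=1-\psi_K$ is a harmonic profile of $\Gamma$. If $\widehat\Gamma$ is uniformly $S$-transient with respect to $K$, then there is $\varepsilon_*>0$ such that $\varepsilon_*\le 1-\psi_K(x)\le 1$ for all $x\in\Gamma$ (so the profile satisfies $h\approx1$).
   Context: $\widehat{\Gamma}$: infinite simple connected graph, symmetric edge weights $\mu_{xy}$ ($\ne0$ iff $x\sim y$), vertex weights $\pi>0$ with $\sum_{y\sim x}\mu_{xy}\le\pi(x)$; $\mathcal{K}(x,y)=\mu_{xy}/\pi(x)$ for $x\ne y$, $\mathcal{K}(x,x)=1-\sum_{z\sim x}\mu_{xz}/\pi(x)$; controlled weights ($\mu_{xy}/\pi(x)\ge1/C_c$ for $y\sim x$) and uniformly lazy ($\mathcal{K}(x,x)\ge C_e>0$). Harnack graph: $p(n,x,y)=\mathcal{K}^n(x,y)/\pi(y)$ satisfies $\frac{c_1}{V(x,\sqrt n)}e^{-d(x,y)^2/(c_2n)}\le p(n,x,y)\le\frac{c_3}{V(x,\sqrt n)}e^{-d(x,y)^2/(c_4 n)}$ for $n\ge d(x,y)$, with $d$ the graph distance and $V(x,r)=\pi(B(x,r))$. $\Gamma$ is the subgraph induced on the complement of $K$, $d_\Gamma$ its intrinsic graph distance; $\partial\Gamma$ is the set of vertices outside $\Gamma$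 adjacent to $\Gamma$. $\Gamma$ is inner uniform if there are $c_u,C_U>0$ such that any $x,y\in\Gamma$ are joined by a path $x=x_0,\dots,x_k=y$ in $\Gamma$ with $k\le C_U d_\Gamma(x,y)$ and $d(x_j,\partial\Gamma)\ge c_u(1+\min\{j,k-j\})$ for all $j$. A harmonic profile of $\Gamma$ is a function $h$ with $h>0$ on $\Gamma$, $h=0$ off $\Gamma$, and $h(x)=\sum_{y}\mathcal{K}(x,y)h(y)$ for all $x\in\Gamma$. $\psi_K(x)=\mathbb{P}^x(\tau_K<\infty)$ with $\tau_K$ the first hitting time of $K$. $\widehat\Gamma$ is $S$-transient w.r.t. $K$ if $\psi_K(x)<1$ for some $x$; uniformly $S$-transient if there are $L,\varepsilon>0$ with $\psi_K(x)\le1-\varepsilon$ whenever $d(x,K)\ge L$. *)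

theory Defs
  imports Complex_Main
begin

definition adj :: "('a \<Rightarrow> 'a \<Rightarrow> real) \<Rightarrow> 'a \<Rightarrow> 'a \<Rightarrow> bool" where
  "adj \<mu> x y \<longleftrightarrow> x \<noteq> y \<and> \<mu> x y \<noteq> 0"

definition nbhd :: "('a \<Rightarrow> 'a \<Rightarrow> real) \<Rightarrow> 'a \<Rightarrow> 'a set" where
  "nbhd \<mu> x = insert x {y. adj \<mu> x y}"

definition is_path_in :: "('a \<Rightarrow> 'a \<Rightarrow> real) \<Rightarrow> 'a set \<Rightarrow> (nat \<Rightarrow> 'a) \<Rightarrow> nat \<Rightarrow> 'a \<Rightarrow> 'a \<Rightarrow> bool" where
  "is_path_in \<mu> S p k x y \<longleftrightarrow> p 0 = x \<and> p k = y \<and> (\<forall>j\<le>k. p j \<in> S)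
     \<and> (\<forall>j<k. adj \<mu> (p j) (p (Suc j)))"

definition gdist_in :: "('a \<Rightarrow> 'a \<Rightarrow> real) \<Rightarrow> 'a set \<Rightarrow> 'a \<Rightarrow> 'a \<Rightarrow> nat" where
  "gdist_in \<mu> S x y = (LEAST k. \<exists>p. is_path_in \<mu> S p k x y)"

abbreviation gdist :: "('a \<Rightarrow> 'a \<Rightarrow> real) \<Rightarrow> 'a \<Rightarrow> 'a \<Rightarrow> nat" where
  "gdist \<mu> \<equiv> gdist_in \<mu> UNIV"

definition weighted_graph :: "('a \<Rightarrow> 'a \<Rightarrow> real) \<Rightarrow> ('a \<Rightarrow> real) \<Rightarrow> bool" where
  "weighted_graph \<mu> \<pi> \<longleftrightarrow>
     infinite (UNIV :: 'a set)
   \<and> (\<forall>x y. \<mu> x y = \<mu> y x)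
   \<and> (\<forall>x y. \<mu> x y \<ge> 0)
   \<and> (\<forall>x. \<mu> x x = 0)
   \<and> (\<forall>x. \<pi> x > 0)
   \<and> (\<forall>x. finite {y. adj \<mu> x y})
   \<and> (\<forall>x. (\<Sum>y\<in>{y. adj \<mu> x y}. \<mu> x y) \<le> \<pi> x)
   \<and> (\<forall>x y. \<exists>k p. is_path_in \<mu> UNIV p k x y)"

definition Kern :: "('a \<Rightarrow> 'a \<Rightarrow> real) \<Rightarrow> ('a \<Rightarrow> real) \<Rightarrow> 'a \<Rightarrow> 'a \<Rightarrow> real" where
  "Kern \<mu> \<pi> x y = (if x = y then 1 - (\<Sum>z\<in>{z. adj \<mu> x z}. \<mu> x z / \<pi> x)
                   else \<mu> x y / \<pi> x)"

definition controlled_weights :: "('a \<Rightarrow> 'a \<Rightarrow> real) \<Rightarrow> ('a \<Rightarrow> real) \<Rightarrow> bool" where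
  "controlled_weights \<mu> \<pi> \<longleftrightarrow> (\<exists>Cc>0. \<forall>x y. adj \<mu> x y \<longrightarrow> \<mu> x y / \<pi> x \<ge> 1 / Cc)"

definition uniformly_lazy :: "('a \<Rightarrow> 'a \<Rightarrow> real) \<Rightarrow> ('a \<Rightarrow> real) \<Rightarrow> bool" where
  "uniformly_lazy \<mu> \<pi> \<longleftrightarrow> (\<exists>Ce>0. \<forall>x. Kern \<mu> \<pi> x x \<ge> Ce)"

text \<open>Iterated kernel K^n(x,y) (K(x,.) is supported on nbhd x).\<close>
fun Kpow :: "('a \<Rightarrow> 'a \<Rightarrow> real) \<Rightarrow> ('a \<Rightarrow> real) \<Rightarrow> nat \<Rightarrow> 'a \<Rightarrow> 'a \<Rightarrow> real" where
  "Kpow \<mu> \<pi> 0 x y = (if x = y then 1 else 0)"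
| "Kpow \<mu> \<pi> (Suc n) x y = (\<Sum>z\<in>nbhd \<mu> x. Kern \<mu> \<pi> x z * Kpow \<mu> \<pi> n z y)"

definition heat_kernel :: "('a \<Rightarrow> 'a \<Rightarrow> real) \<Rightarrow> ('a \<Rightarrow> real) \<Rightarrow> nat \<Rightarrow> 'a \<Rightarrow> 'a \<Rightarrow> real" where
  "heat_kernel \<mu> \<pi> n x y = Kpow \<mu> \<pi> n x y / \<pi> y"

definition vol :: "('a \<Rightarrow> 'a \<Rightarrow> real) \<Rightarrow> ('a \<Rightarrow> real) \<Rightarrow> 'a \<Rightarrow> real \<Rightarrow> real" where
  "vol \<mu> \<pi> x r = (\<Sum>y\<in>{y. real (gdist \<mu> x y) \<le> r}. \<pi> y)"

definition harnack_graph :: "('a \<Rightarrow> 'a \<Rightarrow> real) \<Rightarrow> ('a \<Rightarrow> real) \<Rightarrow> bool" where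
  "harnack_graph \<mu> \<pi> \<longleftrightarrow> weighted_graph \<mu> \<pi> \<and>
     (\<exists>c1 c2 c3 c4. c1 > 0 \<and> c2 > 0 \<and> c3 > 0 \<and> c4 > 0 \<and>
       (\<forall>n x y. n \<ge> gdist \<mu> x y \<longrightarrow>
          c1 / vol \<mu> \<pi> x (sqrt (real n)) * exp (- (real (gdist \<mu> x y))\<^sup>2 / (c2 * real n))
            \<le> heat_kernel \<mu> \<pi> n x y
        \<and> heat_kernel \<mu> \<pi> n x y
            \<le> c3 / vol \<mu> \<pi> x (sqrt (real n)) * exp (- (real (gdist \<mu> x y))\<^sup>2 / (c4 * real n))))"

definition bdry :: "('a \<Rightarrow> 'a \<Rightarrow> real) \<Rightarrow> 'a set \<Rightarrow> 'a set" where
  "bdry \<mu> G = {z. z \<notin> G \<and> (\<exists>x\<in>G. adj \<mu> x z)}"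

definition inner_uniform :: "('a \<Rightarrow> 'a \<Rightarrow> real) \<Rightarrow> 'a set \<Rightarrow> bool" where
  "inner_uniform \<mu> G \<longleftrightarrow> (\<exists>cu CU. cu > 0 \<and> CU > 0 \<and>
     (\<forall>x\<in>G. \<forall>y\<in>G. \<exists>p k. is_path_in \<mu> G p k x y
        \<and> real k \<le> CU * real (gdist_in \<mu> G x y)
        \<and> (\<forall>j\<le>k. \<forall>z\<in>bdry \<mu> G.
              real (gdist \<mu> (p j) z) \<ge> cu * (1 + real (min j (k - j))))))"

definition harmonic_profile :: "('a \<Rightarrow> 'a \<Rightarrow> real) \<Rightarrow> ('a \<Rightarrow> real) \<Rightarrow> 'a set \<Rightarrow> ('a \<Rightarrow> real) \<Rightarrow> bool" where
  "harmonic_profile \<mu> \<pi> G h \<longleftrightarrow>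
     (\<forall>x\<in>G. h x > 0) \<and> (\<forall>x. x \<notin> G \<longrightarrow> h x = 0)
   \<and> (\<forall>x\<in>G. h x = (\<Sum>y\<in>nbhd \<mu> x. Kern \<mu> \<pi> x y * h y))"

text \<open>hit_le n x = P^x(\<tau>_K \<le> n), \<tau>_K = inf {t \<ge> 0. X_t \<in> K}.\<close>
fun hit_le :: "('a \<Rightarrow> 'a \<Rightarrow> real) \<Rightarrow> ('a \<Rightarrow> real) \<Rightarrow> 'a set \<Rightarrow> nat \<Rightarrow> 'a \<Rightarrow> real" where
  "hit_le \<mu> \<pi> K 0 x = (if x \<in> K then 1 else 0)"
| "hit_le \<mu> \<pi> K (Suc n) x =
     (if x \<in> K then 1 else (\<Sum>z\<in>nbhd \<mu> x. Kern \<mu> \<pi> x z * hit_le \<mu> \<pi> K n z))"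

text \<open>\<psi>_K(x) = P^x(\<tau>_K < \<infinity>) = sup_n P^x(\<tau>_K \<le> n).\<close>
definition psi :: "('a \<Rightarrow> 'a \<Rightarrow> real) \<Rightarrow> ('a \<Rightarrow> real) \<Rightarrow> 'a set \<Rightarrow> 'a \<Rightarrow> real" where
  "psi \<mu> \<pi> K x = (SUP n. hit_le \<mu> \<pi> K n x)"

definition S_transient :: "('a \<Rightarrow> 'a \<Rightarrow> real) \<Rightarrow> ('a \<Rightarrow> real) \<Rightarrow> 'a set \<Rightarrow> bool" where
  "S_transient \<mu> \<pi> K \<longleftrightarrow> (\<exists>x. psi \<mu> \<pi> K x < 1)"

definition unif_S_transient :: "('a \<Rightarrow> 'a \<Rightarrow> real) \<Rightarrow> ('a \<Rightarrow> real) \<Rightarrow> 'a set \<Rightarrow> bool" where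
  "unif_S_transient \<mu> \<pi> K \<longleftrightarrow> (\<exists>L \<epsilon>. L > 0 \<and> \<epsilon> > 0 \<and>
     (\<forall>x. (\<forall>z\<in>K. real (gdist \<mu> x z) \<ge> L) \<longrightarrow> psi \<mu> \<pi> K x \<le> 1 - \<epsilon>))"

end

theory Submission
  imports Defs
begin

(* The escape probability h = 1 - psi_K is harmonic off K, as the limit of the finite-horizon
   recursion for P(tau_K <= n). A nonnegative superharmonic function loses at most a factor c per
   edge, where c > 0 is the lower bound on the kernel given by controlled weights; so
   h x >= c^k h y whenever a path of length k inside Gamma joins x to y.
   If h y > 0 for one y, inner uniformity joins every x of Gamma to y inside Gamma, so h > 0 on Gamma.
   Under uniform S-transience, inner uniformity towards a point at distance >= 2m from x (one exists
   since Gamma is infinite and balls are finite) yields a path of length m from x to a point at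
   distance >= c_u (1 + m) >= L from the boundary of Gamma, hence from K, where h >= epsilon;
   thus h x >= c^m epsilon. *)

lemma
  assumes "weighted_graph \<mu> \<pi>"
  shows weighted_graph_nonneg: "0 \<le> \<mu> x y"
    and weighted_graph_vertex_pos: "0 < \<pi> x"
    and weighted_graph_locally_finite: "finite {y. adj \<mu> x y}"
    and weighted_graph_sum_le: "(\<Sum>y\<in>{y. adj \<mu> x y}. \<mu> x y) \<le> \<pi> x"
    and weighted_graph_connected: "\<exists>k p. is_path_in \<mu> UNIV p k x y"
  using assms unfolding weighted_graph_def by blast+

lemma Kern_nonneg:
  assumes "weighted_graph \<mu> \<pi>"
  shows "Kern \<mu> \<pi> x y \<ge> 0"
proof (cases "x = y")
  case True
  have "(\<Sum>z\<in>{z. adj \<mu> x z}. \<mu> x z / \<pi> x) = (\<Sum>z\<in>{z. adj \<mu> x z}. \<mu> x z) / \<pi> x"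
    by (simp add: sum_divide_distrib)
  also have "\<dots> \<le> 1"
    using weighted_graph_sum_le[OF assms] weighted_graph_vertex_pos[OF assms] by simp
  finally show ?thesis using True by (simp add: Kern_def)
next
  case False
  then show ?thesis
    using weighted_graph_nonneg[OF assms] weighted_graph_vertex_pos[OF assms]
    by (simp add: Kern_def less_imp_le)
qed

lemma finite_nbhd:
  assumes "weighted_graph \<mu> \<pi>"
  shows "finite (nbhd \<mu> x)"
  using weighted_graph_locally_finite[OF assms] by (simp add: nbhd_def)

lemma sum_Kern_nbhd:
  assumes "weighted_graph \<mu> \<pi>"
  shows "(\<Sum>y\<in>nbhd \<mu> x. Kern \<mu> \<pi> x y) = 1"
proof -
  have "(\<Sum>y\<in>nbhd \<mu> x. Kern \<mu> \<pi> x y) = Kern \<mu> \<pi> x x + (\<Sum>y\<in>{y. adj \<mu> x y}. Kern \<mu> \<pi> x y)"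
    using weighted_graph_locally_finite[OF assms] by (simp add: nbhd_def adj_def)
  also have "(\<Sum>y\<in>{y. adj \<mu> x y}. Kern \<mu> \<pi> x y) = (\<Sum>y\<in>{y. adj \<mu> x y}. \<mu> x y / \<pi> x)"
    by (rule sum.cong) (auto simp: Kern_def adj_def)
  finally show ?thesis by (simp add: Kern_def)
qed

lemma controlled_weights_Kern_lower_bound:
  assumes "controlled_weights \<mu> \<pi>"
  obtains c where "c > 0" "\<And>x y. adj \<mu> x y \<Longrightarrow> c \<le> Kern \<mu> \<pi> x y"
proof -
  obtain Cc where "Cc > 0" "\<And>x y. adj \<mu> x y \<Longrightarrow> 1 / Cc \<le> \<mu> x y / \<pi> x"
    using assms by (auto simp: controlled_weights_def)
  then show thesis
    by (intro that[of "1 / Cc"]) (auto simp: Kern_def adj_def)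
qed

lemma hit_le_bounds:
  assumes "weighted_graph \<mu> \<pi>"
  shows "0 \<le> hit_le \<mu> \<pi> K n x \<and> hit_le \<mu> \<pi> K n x \<le> 1"
proof (induction n arbitrary: x)
  case 0
  then show ?case by simp
next
  case (Suc n)
  have "0 \<le> (\<Sum>z\<in>nbhd \<mu> x. Kern \<mu> \<pi> x z * hit_le \<mu> \<pi> K n z)"
    using Suc Kern_nonneg[OF assms] by (intro sum_nonneg) auto
  moreover have "(\<Sum>z\<in>nbhd \<mu> x. Kern \<mu> \<pi> x z * hit_le \<mu> \<pi> K n z) \<le> (\<Sum>z\<in>nbhd \<mu> x. Kern \<mu> \<pi> x z)"
    using Suc Kern_nonneg[OF assms] by (intro sum_mono) (simp add: mult_left_le)
  ultimately show ?case using sum_Kern_nbhd[OF assms] by simp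
qed

lemma incseq_hit_le:
  assumes "weighted_graph \<mu> \<pi>"
  shows "incseq (\<lambda>n. hit_le \<mu> \<pi> K n x)"
proof -
  have "hit_le \<mu> \<pi> K n x \<le> hit_le \<mu> \<pi> K (Suc n) x" for n x
  proof (induction n arbitrary: x)
    case 0
    have "0 \<le> (\<Sum>z\<in>nbhd \<mu> x. Kern \<mu> \<pi> x z * hit_le \<mu> \<pi> K 0 z)"
      using Kern_nonneg[OF assms] by (intro sum_nonneg) auto
    then show ?case by simp
  next
    case (Suc n)
    have "(\<Sum>z\<in>nbhd \<mu> x. Kern \<mu> \<pi> x z * hit_le \<mu> \<pi> K n z)
        \<le> (\<Sum>z\<in>nbhd \<mu> x. Kern \<mu> \<pi> x z * hit_le \<mu> \<pi> K (Suc n) z)"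
      using Suc Kern_nonneg[OF assms] by (intro sum_mono mult_left_mono) auto
    then show ?case by simp
  qed
  then show ?thesis by (intro incseq_SucI)
qed

lemma
  assumes "weighted_graph \<mu> \<pi>"
  shows hit_le_tendsto_psi: "(\<lambda>n. hit_le \<mu> \<pi> K n x) \<longlonglongrightarrow> psi \<mu> \<pi> K x"
    and psi_nonneg: "0 \<le> psi \<mu> \<pi> K x"
    and psi_le_1: "psi \<mu> \<pi> K x \<le> 1"
proof -
  have bdd: "bdd_above (range (\<lambda>n. hit_le \<mu> \<pi> K n x))"
    using hit_le_bounds[OF assms] by (intro bdd_aboveI[where M=1]) auto
  show "(\<lambda>n. hit_le \<mu> \<pi> K n x) \<longlonglongrightarrow> psi \<mu> \<pi> K x"
    unfolding psi_def by (rule LIMSEQ_incseq_SUP[OF bdd incseq_hit_le[OF assms]])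
  have "hit_le \<mu> \<pi> K 0 x \<le> psi \<mu> \<pi> K x"
    unfolding psi_def by (rule cSUP_upper[OF _ bdd]) auto
  then show "0 \<le> psi \<mu> \<pi> K x" using hit_le_bounds[OF assms, of K 0 x] by linarith
  show "psi \<mu> \<pi> K x \<le> 1"
    unfolding psi_def using hit_le_bounds[OF assms] by (intro cSUP_least) auto
qed

lemma psi_in_K:
  assumes "x \<in> K"
  shows "psi \<mu> \<pi> K x = 1"
proof -
  have "hit_le \<mu> \<pi> K n x = 1" for n using assms by (cases n) auto
  then show ?thesis by (simp add: psi_def)
qed

lemma psi_harmonic:
  assumes "weighted_graph \<mu> \<pi>" "x \<notin> K"
  shows "psi \<mu> \<pi> K x = (\<Sum>y\<in>nbhd \<mu> x. Kern \<mu> \<pi> x y * psi \<mu> \<pi> K y)"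
proof -
  have "(\<lambda>n. hit_le \<mu> \<pi> K (Suc n) x) \<longlonglongrightarrow> (\<Sum>y\<in>nbhd \<mu> x. Kern \<mu> \<pi> x y * psi \<mu> \<pi> K y)"
    using assms(2) by (simp, intro tendsto_sum tendsto_mult_left hit_le_tendsto_psi[OF assms(1)])
  moreover have "(\<lambda>n. hit_le \<mu> \<pi> K (Suc n) x) \<longlonglongrightarrow> psi \<mu> \<pi> K x"
    using hit_le_tendsto_psi[OF assms(1)] by (rule LIMSEQ_Suc)
  ultimately show ?thesis using LIMSEQ_unique by blast
qed

lemma escape_harmonic:
  assumes "weighted_graph \<mu> \<pi>" "x \<notin> K"
  shows "1 - psi \<mu> \<pi> K x = (\<Sum>y\<in>nbhd \<mu> x. Kern \<mu> \<pi> x y * (1 - psi \<mu> \<pi> K y))"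
  using psi_harmonic[OF assms] sum_Kern_nbhd[OF assms(1), of x]
  by (simp add: right_diff_distrib sum_subtractf)

definition superharmonic_on :: "('a \<Rightarrow> 'a \<Rightarrow> real) \<Rightarrow> ('a \<Rightarrow> real) \<Rightarrow> 'a set \<Rightarrow> ('a \<Rightarrow> real) \<Rightarrow> bool" where
  "superharmonic_on \<mu> \<pi> G h \<longleftrightarrow> (\<forall>x\<in>G. (\<Sum>y\<in>nbhd \<mu> x. Kern \<mu> \<pi> x y * h y) \<le> h x)"

lemma escape_superharmonic:
  assumes "weighted_graph \<mu> \<pi>"
  shows "superharmonic_on \<mu> \<pi> (- K) (\<lambda>x. 1 - psi \<mu> \<pi> K x)"
  using escape_harmonic[OF assms] by (simp add: superharmonic_on_def)

lemma superharmonic_step: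
  assumes "weighted_graph \<mu> \<pi>" "superharmonic_on \<mu> \<pi> G h" "\<And>y. 0 \<le> h y"
    and "x \<in> G" "adj \<mu> x y"
  shows "Kern \<mu> \<pi> x y * h y \<le> h x"
proof -
  have "Kern \<mu> \<pi> x y * h y \<le> (\<Sum>z\<in>nbhd \<mu> x. Kern \<mu> \<pi> x z * h z)"
    using assms finite_nbhd[OF assms(1)] Kern_nonneg[OF assms(1)]
    by (intro member_le_sum) (auto simp: nbhd_def)
  also have "\<dots> \<le> h x"
    using assms(2,4) by (simp add: superharmonic_on_def)
  finally show ?thesis .
qed

lemma superharmonic_along_path:
  assumes "weighted_graph \<mu> \<pi>" "superharmonic_on \<mu> \<pi> G h" "\<And>y. 0 \<le> h y"
    and "c > 0" "\<And>u v. adj \<mu> u v \<Longrightarrow> c \<le> Kern \<mu> \<pi> u v"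
    and "is_path_in \<mu> G p k x y" "j \<le> k"
  shows "c ^ j * h (p j) \<le> h x"
  using \<open>j \<le> k\<close>
proof (induction j)
  case 0
  then show ?case using assms(6) by (simp add: is_path_in_def)
next
  case (Suc j)
  have edge: "adj \<mu> (p j) (p (Suc j))" and "p j \<in> G"
    using assms(6) Suc.prems by (auto simp: is_path_in_def)
  have "c * h (p (Suc j)) \<le> Kern \<mu> \<pi> (p j) (p (Suc j)) * h (p (Suc j))"
    using assms(5)[OF edge] assms(3) by (rule mult_right_mono)
  also have "\<dots> \<le> h (p j)"
    using superharmonic_step[OF assms(1-3) \<open>p j \<in> G\<close> edge] .
  finally have "c ^ Suc j * h (p (Suc j)) \<le> c ^ j * h (p j)"
    using assms(4) by (simp add: mult.assoc mult_left_mono)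
  also have "\<dots> \<le> h x"
    using Suc by simp
  finally show ?case .
qed

lemma superharmonic_pos_of_path:
  assumes "weighted_graph \<mu> \<pi>" "superharmonic_on \<mu> \<pi> G h" "\<And>y. 0 \<le> h y"
    and "c > 0" "\<And>u v. adj \<mu> u v \<Longrightarrow> c \<le> Kern \<mu> \<pi> u v"
    and "is_path_in \<mu> G p k x y" "h y > 0"
  shows "h x > 0"
proof -
  have "c ^ k * h y \<le> h x"
    using superharmonic_along_path[OF assms(1-6) order_refl] assms(6)
    by (simp add: is_path_in_def)
  moreover have "c ^ k * h y > 0"
    using assms(4,7) by simp
  ultimately show ?thesis by linarith
qed

lemma is_path_in_mono:
  "is_path_in \<mu> S p k x y \<Longrightarrow> S \<subseteq> T \<Longrightarrow> is_path_in \<mu> T p k x y"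
  by (auto simp: is_path_in_def)

lemma is_path_in_prefix:
  "is_path_in \<mu> S p k x y \<Longrightarrow> j \<le> k \<Longrightarrow> is_path_in \<mu> S p j x (p j)"
  by (auto simp: is_path_in_def)

lemma gdist_le_path_length:
  "is_path_in \<mu> UNIV p k x y \<Longrightarrow> gdist \<mu> x y \<le> k"
  unfolding gdist_in_def by (rule Least_le) blast

lemma gdist_attained:
  assumes "weighted_graph \<mu> \<pi>"
  obtains p where "is_path_in \<mu> UNIV p (gdist \<mu> x y) x y"
  using weighted_graph_connected[OF assms, of x y] LeastI_ex[of "\<lambda>k. \<exists>p. is_path_in \<mu> UNIV p k x y"]
  unfolding gdist_in_def by blast

lemma finite_path_endpoints:
  assumes "\<And>x. finite {y. adj \<mu> x y}"
  shows "finite {y. \<exists>p. is_path_in \<mu> UNIV p k x y}"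
proof (induction k)
  case 0
  have "{y. \<exists>p. is_path_in \<mu> UNIV p 0 x y} \<subseteq> {x}"
    by (auto simp: is_path_in_def)
  then show ?case using finite_subset by blast
next
  case (Suc k)
  have "{y. \<exists>p. is_path_in \<mu> UNIV p (Suc k) x y}
      \<subseteq> (\<Union>z\<in>{y. \<exists>p. is_path_in \<mu> UNIV p k x y}. {y. adj \<mu> z y})"
  proof
    fix y assume "y \<in> {y. \<exists>p. is_path_in \<mu> UNIV p (Suc k) x y}"
    then obtain p where p: "is_path_in \<mu> UNIV p (Suc k) x y" by blast
    then have "is_path_in \<mu> UNIV p k x (p k)" and "adj \<mu> (p k) y"
      by (auto simp: is_path_in_def)
    then show "y \<in> (\<Union>z\<in>{y. \<exists>p. is_path_in \<mu> UNIV p k x y}. {y. adj \<mu> z y})" by blast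
  qed
  moreover have "finite (\<Union>z\<in>{y. \<exists>p. is_path_in \<mu> UNIV p k x y}. {y. adj \<mu> z y})"
    using Suc assms by blast
  ultimately show ?case using finite_subset by blast
qed

lemma bdry_point_not_farther:
  assumes "weighted_graph \<mu> \<pi>" "x \<in> G" "z \<notin> G"
  obtains z' where "z' \<in> bdry \<mu> G" "gdist \<mu> x z' \<le> gdist \<mu> x z"
proof -
  obtain p where p: "is_path_in \<mu> UNIV p (gdist \<mu> x z) x z"
    using gdist_attained[OF assms(1)] .
  define i where "i = (LEAST i. p i \<notin> G)"
  have "p (gdist \<mu> x z) \<notin> G"
    using p assms(3) by (simp add: is_path_in_def)
  then have out: "p i \<notin> G" and i_le: "i \<le> gdist \<mu> x z"
    unfolding i_def by (rule LeastI, rule Least_le)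
  have "i \<noteq> 0"
  proof
    assume "i = 0"
    then show False using out p assms(2) by (simp add: is_path_in_def)
  qed
  then obtain j where j: "i = Suc j" by (cases i) auto
  have "p j \<in> G"
    using j not_less_Least[of j "\<lambda>i. p i \<notin> G"] unfolding i_def by auto
  moreover have "adj \<mu> (p j) (p i)"
    using p j i_le by (auto simp: is_path_in_def)
  ultimately have "p i \<in> bdry \<mu> G"
    using out by (auto simp: bdry_def)
  moreover have "gdist \<mu> x (p i) \<le> gdist \<mu> x z"
    using gdist_le_path_length[OF is_path_in_prefix[OF p i_le]] i_le by simp
  ultimately show thesis using that by blast
qed

lemma gdist_outside_lower_bound:
  assumes "weighted_graph \<mu> \<pi>" "x \<in> G" "\<forall>z\<in>bdry \<mu> G. r \<le> real (gdist \<mu> x z)" "z \<notin> G"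
  shows "r \<le> real (gdist \<mu> x z)"
proof -
  obtain z' where "z' \<in> bdry \<mu> G" "gdist \<mu> x z' \<le> gdist \<mu> x z"
    using bdry_point_not_farther[OF assms(1,2,4)] .
  then show ?thesis
    using assms(3) by force
qed

lemma inner_uniform_connected:
  assumes "inner_uniform \<mu> G" "x \<in> G" "y \<in> G"
  obtains p k where "is_path_in \<mu> G p k x y"
  using assms unfolding inner_uniform_def by blast

lemma inner_uniform_deep_points:
  assumes "weighted_graph \<mu> \<pi>" "inner_uniform \<mu> G" "infinite G"
  obtains cu where "cu > 0"
    "\<And>x m. x \<in> G \<Longrightarrow> \<exists>p. is_path_in \<mu> G p m x (p m)
        \<and> (\<forall>z\<in>bdry \<mu> G. cu * (1 + real m) \<le> real (gdist \<mu> (p m) z))"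
proof -
  obtain cu CU where "cu > 0" and iu: "\<forall>x\<in>G. \<forall>y\<in>G. \<exists>p k. is_path_in \<mu> G p k x y
        \<and> real k \<le> CU * real (gdist_in \<mu> G x y)
        \<and> (\<forall>j\<le>k. \<forall>z\<in>bdry \<mu> G. real (gdist \<mu> (p j) z) \<ge> cu * (1 + real (min j (k - j))))"
    using assms(2) unfolding inner_uniform_def by blast
  have "\<exists>p. is_path_in \<mu> G p m x (p m)
        \<and> (\<forall>z\<in>bdry \<mu> G. cu * (1 + real m) \<le> real (gdist \<mu> (p m) z))" if "x \<in> G" for x m
  proof -
    let ?near = "\<Union>k<2 * m. {y. \<exists>p. is_path_in \<mu> UNIV p k x y}"
    have "finite ?near"
      by (simp add: finite_path_endpoints weighted_graph_locally_finite[OF assms(1)])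
    then have "infinite (G - ?near)"
      using assms(3) by (rule Diff_infinite_finite)
    then obtain y where "y \<in> G" "y \<notin> ?near"
      using infinite_imp_nonempty by blast
    then obtain p k where p: "is_path_in \<mu> G p k x y"
      and deep: "\<forall>j\<le>k. \<forall>z\<in>bdry \<mu> G. real (gdist \<mu> (p j) z) \<ge> cu * (1 + real (min j (k - j)))"
      using iu[rule_format, OF \<open>x \<in> G\<close> \<open>y \<in> G\<close>] by blast
    have "2 * m \<le> k"
    proof (rule ccontr)
      assume "\<not> 2 * m \<le> k"
      then have "y \<in> ?near"
        using is_path_in_mono[OF p subset_UNIV] by auto
      with \<open>y \<notin> ?near\<close> show False by contradiction
    qed
    then have "min m (k - m) = m" and "m \<le> k"
      by simp_all
    then show ?thesis
      using is_path_in_prefix[OF p \<open>m \<le> k\<close>] deep by metis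
  qed
  then show thesis using that \<open>cu > 0\<close> by blast
qed

lemma S_transient_escape_pos:
  assumes "weighted_graph \<mu> \<pi>" "controlled_weights \<mu> \<pi>" "inner_uniform \<mu> (- K)"
    and "S_transient \<mu> \<pi> K" "x \<notin> K"
  shows "psi \<mu> \<pi> K x < 1"
proof -
  obtain x0 where x0: "psi \<mu> \<pi> K x0 < 1"
    using assms(4) by (auto simp: S_transient_def)
  then have "x0 \<notin> K"
    using psi_in_K[of x0 K \<mu> \<pi>] by auto
  then obtain p k where "is_path_in \<mu> (- K) p k x x0"
    using inner_uniform_connected[OF assms(3)] assms(5) by blast
  moreover obtain c where "c > 0" "\<And>u v. adj \<mu> u v \<Longrightarrow> c \<le> Kern \<mu> \<pi> u v"
    using controlled_weights_Kern_lower_bound[OF assms(2)] by blast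
  ultimately have "1 - psi \<mu> \<pi> K x > 0"
    using superharmonic_pos_of_path[OF assms(1) escape_superharmonic[OF assms(1)]]
      psi_le_1[OF assms(1)] x0 by simp
  then show ?thesis by simp
qed

lemma unif_S_transient_escape_lower_bound:
  assumes "weighted_graph \<mu> \<pi>" "controlled_weights \<mu> \<pi>" "inner_uniform \<mu> (- K)"
    and "infinite (- K)" "unif_S_transient \<mu> \<pi> K"
  obtains \<epsilon> where "\<epsilon> > 0" "\<And>x. x \<notin> K \<Longrightarrow> \<epsilon> \<le> 1 - psi \<mu> \<pi> K x"
proof -
  obtain L \<delta> where "L > 0" "\<delta> > 0"
    and far: "\<And>x. (\<forall>z\<in>K. L \<le> real (gdist \<mu> x z)) \<Longrightarrow> psi \<mu> \<pi> K x \<le> 1 - \<delta>"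
    using assms(5) by (auto simp: unif_S_transient_def)
  obtain c where "c > 0" and c: "\<And>u v. adj \<mu> u v \<Longrightarrow> c \<le> Kern \<mu> \<pi> u v"
    using controlled_weights_Kern_lower_bound[OF assms(2)] by blast
  obtain cu where "cu > 0" and deep: "\<And>x m. x \<in> - K \<Longrightarrow> \<exists>p. is_path_in \<mu> (- K) p m x (p m)
        \<and> (\<forall>z\<in>bdry \<mu> (- K). cu * (1 + real m) \<le> real (gdist \<mu> (p m) z))"
    using inner_uniform_deep_points[OF assms(1,3,4)] by blast
  define m where "m = nat \<lceil>L / cu\<rceil>"
  have "L / cu \<le> real m"
    unfolding m_def by (rule real_nat_ceiling_ge)
  then have "L \<le> cu * (1 + real m)"
    using \<open>cu > 0\<close> by (simp add: divide_le_eq algebra_simps)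
  have "c ^ m * \<delta> \<le> 1 - psi \<mu> \<pi> K x" if "x \<notin> K" for x
  proof -
    obtain p where p: "is_path_in \<mu> (- K) p m x (p m)"
      and p_deep: "\<forall>z\<in>bdry \<mu> (- K). cu * (1 + real m) \<le> real (gdist \<mu> (p m) z)"
      using deep \<open>x \<notin> K\<close> by blast
    have "p m \<in> - K"
      using p by (simp add: is_path_in_def)
    have "\<forall>z\<in>K. L \<le> real (gdist \<mu> (p m) z)"
      using gdist_outside_lower_bound[OF assms(1) \<open>p m \<in> - K\<close>] p_deep \<open>L \<le> cu * (1 + real m)\<close>
      by (meson ComplD order_trans)
    then have "\<delta> \<le> 1 - psi \<mu> \<pi> K (p m)"
      using far by fastforce
    then have "c ^ m * \<delta> \<le> c ^ m * (1 - psi \<mu> \<pi> K (p m))"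
      using \<open>c > 0\<close> by simp
    also have "\<dots> \<le> 1 - psi \<mu> \<pi> K x"
      using superharmonic_along_path[OF assms(1) escape_superharmonic[OF assms(1)] _ \<open>c > 0\<close> c p]
        psi_le_1[OF assms(1)] by simp
    finally show ?thesis .
  qed
  then show thesis
    using that[of "c ^ m * \<delta>"] \<open>c > 0\<close> \<open>\<delta> > 0\<close> by simp
qed

lemma S_transient_harmonic_profile:
  assumes "weighted_graph \<mu> \<pi>" "controlled_weights \<mu> \<pi>" "inner_uniform \<mu> (- K)"
    and "S_transient \<mu> \<pi> K"
  shows "harmonic_profile \<mu> \<pi> (- K) (\<lambda>x. 1 - psi \<mu> \<pi> K x)"
  unfolding harmonic_profile_def
proof (intro conjI ballI allI impI)
  fix x assume "x \<in> - K"
  then show "1 - psi \<mu> \<pi> K x > 0"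
    using S_transient_escape_pos[OF assms] by simp
  show "1 - psi \<mu> \<pi> K x = (\<Sum>y\<in>nbhd \<mu> x. Kern \<mu> \<pi> x y * (1 - psi \<mu> \<pi> K y))"
    using escape_harmonic[OF assms(1)] \<open>x \<in> - K\<close> by simp
next
  fix x assume "x \<notin> - K"
  then show "1 - psi \<mu> \<pi> K x = 0"
    using psi_in_K by simp
qed

theorem lemma3p11:
  fixes \<mu> :: "'a \<Rightarrow> 'a \<Rightarrow> real" and \<pi> :: "'a \<Rightarrow> real" and K :: "'a set"
  assumes "harnack_graph \<mu> \<pi>"
    and "controlled_weights \<mu> \<pi>"
    and "uniformly_lazy \<mu> \<pi>"
    and "infinite (- K)"
    and "inner_uniform \<mu> (- K)"
  shows "(S_transient \<mu> \<pi> K \<longrightarrow> harmonic_profile \<mu> \<pi> (- K) (\<lambda>x. 1 - psi \<mu> \<pi> K x))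
       \<and> (unif_S_transient \<mu> \<pi> K \<longrightarrow>
            (\<exists>\<epsilon>>0. \<forall>x\<in>- K. \<epsilon> \<le> 1 - psi \<mu> \<pi> K x \<and> 1 - psi \<mu> \<pi> K x \<le> 1))"
proof (intro conjI impI)
  have wg: "weighted_graph \<mu> \<pi>"
    using assms(1) by (simp add: harnack_graph_def)
  show "harmonic_profile \<mu> \<pi> (- K) (\<lambda>x. 1 - psi \<mu> \<pi> K x)" if "S_transient \<mu> \<pi> K"
    using S_transient_harmonic_profile[OF wg assms(2,5) that] .
  show "\<exists>\<epsilon>>0. \<forall>x\<in>- K. \<epsilon> \<le> 1 - psi \<mu> \<pi> K x \<and> 1 - psi \<mu> \<pi> K x \<le> 1"
    if unif: "unif_S_transient \<mu> \<pi> K"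
  proof -
    obtain \<epsilon> where "\<epsilon> > 0" "\<And>x. x \<notin> K \<Longrightarrow> \<epsilon> \<le> 1 - psi \<mu> \<pi> K x"
      using unif_S_transient_escape_lower_bound[OF wg assms(2,5,4) unif] by blast
    then show ?thesis
      using psi_nonneg[OF wg] by force
  qed
qed

end
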